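(* Let $v_3:\mathbb{P}(\mathbb{K}^2)\hookrightarrow\mathbb{P}(\operatorname{Sym}^3\mathbb{K}^2)\cong\mathbb{P}^3$ be the Veronese embedding and let $L\subseteq\mathbb{P}^3$ be a line not intersecting $v_3(\mathbb{P}^1)$. Then there exist coordinates (linear forms) $x,y$ on $\mathbb{P}^1$ and scalars $a,b\in\mathbb{K}$ such that $L$ is spanned by the two points $[x^3+ay^3]$ and $[x^3+b(x+y)^3]$.
   Context: $\mathbb{K}$ is an algebraically closed field of characteristic zero; points of $\mathbb{P}(\operatorname{Sym}^3\mathbb{K}^2)$ are identified with binary cubic forms up to scalar, and $v_3([\ell])=[\ell^3]$. *)

theory Defs
  imports "HOL-Computational_Algebra.Polynomial"
begin

text \<open>Binary cubic forms over K are represented as their evaluation functions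
  K x K -> K (K is infinite, so this determines the coefficients).\<close>

definition is_cubic_form :: "('a::comm_ring_1 \<times> 'a \<Rightarrow> 'a) \<Rightarrow> bool" where
  "is_cubic_form f \<longleftrightarrow> (\<exists>c0 c1 c2 c3. f = (\<lambda>(X, Y). c0 * X^3 + c1 * X^2 * Y + c2 * X * Y^2 + c3 * Y^3))"

definition linform :: "'a::comm_ring_1 \<Rightarrow> 'a \<Rightarrow> ('a \<times> 'a \<Rightarrow> 'a)" where
  "linform p q = (\<lambda>(X, Y). p * X + q * Y)"

text \<open>Linear span of two forms (a line in P(Sym^3 K^2), as the 2-dim subspace).\<close>
definition span2 :: "('b \<Rightarrow> 'a::comm_ring_1) \<Rightarrow> ('b \<Rightarrow> 'a) \<Rightarrow> ('b \<Rightarrow> 'a) set" where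
  "span2 f g = {h. \<exists>\<alpha> \<beta>. h = (\<lambda>v. \<alpha> * f v + \<beta> * g v)}"

definition on_veronese :: "('a::comm_ring_1 \<times> 'a \<Rightarrow> 'a) \<Rightarrow> bool" where
  "on_veronese h \<longleftrightarrow> h \<noteq> (\<lambda>_. 0) \<and> (\<exists>c p q. h = (\<lambda>v. c * (linform p q v)^3))"

end

theory Submission
  imports Defs
begin

(*
  Put the point of the twisted cubic at [X^3]. If the pencil contains no nonzero multiple of X^2,
  it has a basis f = a X^3 + b X^2 Y + X Y^2, g = c X^3 + d X^2 Y + Y^3, and 3k f + g equals
  e X^3 + (kX + Y)^3 exactly when 3k^2 = 3bk + d. When 3b^2 + 4d is nonzero this quadratic has two
  roots k1, k2, so L meets the secants joining [X^3] to [(k1 X + Y)^3] and to [(k2 X + Y)^3]; the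
  coefficients e are nonzero because L misses the curve, and x = (k2 - k1) X, y = k1 X + Y give the
  normal form. Both genericity conditions can be reached by moving the point along the curve with a
  shear X -> X - tY: each is the nonvanishing of a polynomial in t, which is not the zero polynomial,
  the first because f and g are independent, the second because otherwise L would contain a cube.
*)

fun cubic :: "'a \<times> 'a \<times> 'a \<times> 'a \<Rightarrow> 'a \<times> 'a \<Rightarrow> 'a::comm_ring_1" where
  "cubic (c0, c1, c2, c3) (X, Y) = c0 * X^3 + c1 * X^2 * Y + c2 * X * Y^2 + c3 * Y^3"

lemma is_cubic_form_iff: "is_cubic_form f \<longleftrightarrow> (\<exists>c. f = cubic c)"
proof
  assume "is_cubic_form f"
  then obtain c0 c1 c2 c3 where
    "f = (\<lambda>(X, Y). c0 * X^3 + c1 * X^2 * Y + c2 * X * Y^2 + c3 * Y^3)"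
    by (auto simp: is_cubic_form_def)
  then have "f = cubic (c0, c1, c2, c3)"
    by (auto simp: fun_eq_iff)
  then show "\<exists>c. f = cubic c" ..
next
  assume "\<exists>c. f = cubic c"
  then obtain c0 c1 c2 c3 where "f = cubic (c0, c1, c2, c3)"
    by (metis prod_cases4)
  then show "is_cubic_form f"
    unfolding is_cubic_form_def by (auto simp: fun_eq_iff)
qed

lemma cubic_lincomb:
  "(\<lambda>v. \<alpha> * cubic (f0, f1, f2, f3) v + \<beta> * cubic (g0, g1, g2, g3) v) =
   cubic (\<alpha>*f0 + \<beta>*g0, \<alpha>*f1 + \<beta>*g1, \<alpha>*f2 + \<beta>*g2, \<alpha>*f3 + \<beta>*g3)"
  by (auto simp: fun_eq_iff algebra_simps)

lemma cubic_zero: "cubic (0, 0, 0, 0) = (\<lambda>_. 0)"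
  by (auto simp: fun_eq_iff)

lemma span2_generators: "f \<in> span2 f g" "g \<in> span2 f g"
proof -
  have "f = (\<lambda>v. 1 * f v + 0 * g v)" "g = (\<lambda>v. 0 * f v + 1 * g v)"
    by simp_all
  then show "f \<in> span2 f g" "g \<in> span2 f g"
    unfolding span2_def by blast+
qed

lemma span2_change_basis:
  fixes f g :: "'b \<Rightarrow> 'a::field"
  assumes "u1 * v2 - u2 * v1 \<noteq> 0"
  shows "span2 f g = span2 (\<lambda>v. u1 * f v + v1 * g v) (\<lambda>v. u2 * f v + v2 * g v)"
proof
  show "span2 (\<lambda>v. u1 * f v + v1 * g v) (\<lambda>v. u2 * f v + v2 * g v) \<subseteq> span2 f g"
  proof
    fix h assume "h \<in> span2 (\<lambda>v. u1 * f v + v1 * g v) (\<lambda>v. u2 * f v + v2 * g v)"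
    then obtain \<alpha> \<beta> where "h = (\<lambda>v. \<alpha> * (u1 * f v + v1 * g v) + \<beta> * (u2 * f v + v2 * g v))"
      by (auto simp: span2_def)
    then have "h = (\<lambda>v. (\<alpha>*u1 + \<beta>*u2) * f v + (\<alpha>*v1 + \<beta>*v2) * g v)"
      by (simp add: algebra_simps)
    then show "h \<in> span2 f g"
      unfolding span2_def by blast
  qed
next
  define D where "D = u1 * v2 - u2 * v1"
  have "D \<noteq> 0"
    using assms by (simp add: D_def)
  show "span2 f g \<subseteq> span2 (\<lambda>v. u1 * f v + v1 * g v) (\<lambda>v. u2 * f v + v2 * g v)"
  proof
    fix h assume "h \<in> span2 f g"
    then obtain \<alpha> \<beta> where h: "h = (\<lambda>v. \<alpha> * f v + \<beta> * g v)"
      by (auto simp: span2_def)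
    have "h x = ((\<alpha>*v2 - \<beta>*u2) / D) * (u1 * f x + v1 * g x) +
                ((\<beta>*u1 - \<alpha>*v1) / D) * (u2 * f x + v2 * g x)" for x
    proof -
      have "(\<alpha>*v2 - \<beta>*u2) * (u1 * f x + v1 * g x) + (\<beta>*u1 - \<alpha>*v1) * (u2 * f x + v2 * g x)
            = D * h x"
        by (simp add: h D_def algebra_simps)
      then show ?thesis
        using \<open>D \<noteq> 0\<close> by (simp add: add_divide_distrib[symmetric])
    qed
    then show "h \<in> span2 (\<lambda>v. u1 * f v + v1 * g v) (\<lambda>v. u2 * f v + v2 * g v)"
      unfolding span2_def by blast
  qed
qed

definition secant_normal_form :: "('a::comm_ring_1 \<times> 'a \<Rightarrow> 'a) set \<Rightarrow> bool" where
  "secant_normal_form V \<longleftrightarrow> (\<exists>p q r s a b. p * s - q * r \<noteq> 0 \<and>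
     V = span2 (\<lambda>v. (linform p q v)^3 + a * (linform r s v)^3)
               (\<lambda>v. (linform p q v)^3 + b * (linform p q v + linform r s v)^3))"

definition shear :: "'a::comm_ring_1 \<Rightarrow> ('a \<times> 'a \<Rightarrow> 'a) \<Rightarrow> 'a \<times> 'a \<Rightarrow> 'a" where
  "shear u F = (\<lambda>(X, Y). F (X - u * Y, Y))"

fun shear_coeffs :: "'a::comm_ring_1 \<Rightarrow> 'a \<times> 'a \<times> 'a \<times> 'a \<Rightarrow> 'a \<times> 'a \<times> 'a \<times> 'a" where
  "shear_coeffs u (c0, c1, c2, c3) =
     (c0, c1 - 3*u*c0, c2 - 2*u*c1 + 3*u^2*c0, c3 - u*c2 + u^2*c1 - u^3*c0)"

lemma shear_cubic: "shear u (cubic c) = cubic (shear_coeffs u c)"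
  by (cases c) (auto simp: shear_def fun_eq_iff power2_eq_square power3_eq_cube algebra_simps)

lemma shear_shear_neg [simp]: "shear (-u) (shear u F) = F"
  by (auto simp: shear_def fun_eq_iff)

lemma shear_lincomb:
  "shear u (\<lambda>v. \<alpha> * f v + \<beta> * g v) = (\<lambda>v. \<alpha> * shear u f v + \<beta> * shear u g v)"
  by (auto simp: shear_def fun_eq_iff)

lemma span2_shear: "span2 (shear u f) (shear u g) = shear u ` span2 f g"
  by (auto simp: span2_def shear_lincomb[symmetric])

lemma span2_cubic_shear_coeffs:
  "span2 (cubic (shear_coeffs u F)) (cubic (shear_coeffs u G)) = shear u ` span2 (cubic F) (cubic G)"
  by (simp only: shear_cubic[symmetric] span2_shear)

lemma image_shear_shear_neg: "shear (-u) ` shear u ` V = V"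
  by (simp add: image_image)

lemma on_veronese_shear:
  assumes "on_veronese h"
  shows "on_veronese (shear u h)"
proof -
  obtain c p q where nz: "h \<noteq> (\<lambda>_. 0)" and h: "h = (\<lambda>v. c * (linform p q v)^3)"
    using assms by (auto simp: on_veronese_def)
  have "shear u h = (\<lambda>v. c * (linform p (q - u*p) v)^3)"
    by (auto simp: h shear_def linform_def fun_eq_iff algebra_simps)
  moreover have "shear u h \<noteq> (\<lambda>_. 0)"
  proof
    assume "shear u h = (\<lambda>_. 0)"
    then have "h = shear (-u) (\<lambda>_. 0)"
      using shear_shear_neg[of u h] by simp
    with nz show False
      by (simp add: shear_def case_prod_unfold)
  qed
  ultimately show ?thesis
    by (auto simp: on_veronese_def)
qed

lemma avoids_veronese_shear:
  assumes "\<forall>h\<in>V. \<not> on_veronese h"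
  shows "\<forall>h\<in>shear u ` V. \<not> on_veronese h"
  using assms on_veronese_shear[where u="-u"] by (metis imageE shear_shear_neg)

lemma secant_normal_form_shear:
  assumes "secant_normal_form V"
  shows "secant_normal_form (shear u ` V)"
proof -
  obtain p q r s a b where det: "p * s - q * r \<noteq> 0" and
    V: "V = span2 (\<lambda>v. (linform p q v)^3 + a * (linform r s v)^3)
                  (\<lambda>v. (linform p q v)^3 + b * (linform p q v + linform r s v)^3)"
    using assms by (auto simp: secant_normal_form_def)
  have "shear u ` V =
    span2 (\<lambda>v. (linform p (q - u*p) v)^3 + a * (linform r (s - u*r) v)^3)
          (\<lambda>v. (linform p (q - u*p) v)^3 + b * (linform p (q - u*p) v + linform r (s - u*r) v)^3)"
    unfolding V span2_shear[symmetric]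
    by (auto simp: shear_def linform_def algebra_simps intro!: arg_cong2[where f=span2])
  moreover have "p * (s - u*r) - (q - u*p) * r \<noteq> 0"
    using det by (simp add: algebra_simps)
  ultimately show ?thesis
    unfolding secant_normal_form_def by blast
qed

lemma secant_normal_form_shear_iff: "secant_normal_form (shear u ` V) \<longleftrightarrow> secant_normal_form V"
  using secant_normal_form_shear[of "shear u ` V" "-u"] secant_normal_form_shear[of V u]
  by (auto simp: image_shear_shear_neg)

lemma quadratic_two_roots:
  fixes a b c :: "'a::{alg_closed_field, field_char_0}"
  assumes "a \<noteq> 0" and "b^2 - 4*a*c \<noteq> 0"
  shows "\<exists>x1 x2. x1 \<noteq> x2 \<and> a*x1^2 + b*x1 + c = 0 \<and> a*x2^2 + b*x2 + c = 0"
proof -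
  obtain r :: 'a where r: "r^2 = b^2 - 4*a*c"
    using nth_root_exists[of 2] by auto
  then have "r \<noteq> 0"
    using assms(2) by auto
  have root: "a*x^2 + b*x + c = 0" if "(2*a*x + b)^2 = r^2" for x
  proof -
    have "4*a*(a*x^2 + b*x + c) = (2*a*x + b)^2 - (b^2 - 4*a*c)"
      by (simp add: algebra_simps power2_eq_square)
    with that r assms(1) show ?thesis
      by simp
  qed
  show ?thesis
  proof (intro exI conjI)
    show "(r - b)/(2*a) \<noteq> (-r - b)/(2*a)"
      using assms(1) \<open>r \<noteq> 0\<close> by (simp add: field_simps)
    show "a*((r - b)/(2*a))^2 + b*((r - b)/(2*a)) + c = 0"
      using assms(1) by (intro root) (simp add: field_simps)
    show "a*((-r - b)/(2*a))^2 + b*((-r - b)/(2*a)) + c = 0"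
      using assms(1) by (intro root) (simp add: field_simps power2_eq_square)
  qed
qed

lemma cube_notin_if_avoids_veronese:
  assumes "\<forall>h\<in>V. \<not> on_veronese h"
  shows "(\<lambda>v. (linform p 1 v)^3) \<notin> V"
proof -
  have "(\<lambda>v. (linform p 1 v)^3) \<noteq> (\<lambda>_. 0)"
    using fun_cong[of "\<lambda>v. (linform p 1 v)^3" "\<lambda>_. 0" "(0, 1)"] by (auto simp: linform_def)
  then have "on_veronese (\<lambda>v. (linform p 1 v)^3)"
    unfolding on_veronese_def by (metis mult_1)
  with assms show ?thesis
    by blast
qed

lemma secant_normal_form_of_secants:
  fixes e1 e2 k1 k2 :: "'a::field"
  assumes "e1 \<noteq> 0" "e2 \<noteq> 0" "k1 \<noteq> k2"
  shows "secant_normal_form (span2 (\<lambda>v. e1 * (linform 1 0 v)^3 + (linform k1 1 v)^3)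
                                   (\<lambda>v. e2 * (linform 1 0 v)^3 + (linform k2 1 v)^3))"
proof -
  define \<delta> where "\<delta> = k2 - k1"
  have "\<delta> \<noteq> 0"
    using assms(3) by (simp add: \<delta>_def)
  let ?F1 = "\<lambda>v. e1 * (linform 1 0 v)^3 + (linform k1 1 v)^3"
  let ?F2 = "\<lambda>v. e2 * (linform 1 0 v)^3 + (linform k2 1 v)^3"
  have "span2 ?F1 ?F2 =
        span2 (\<lambda>v. (\<delta>^3/e1) * ?F1 v + 0 * ?F2 v) (\<lambda>v. 0 * ?F1 v + (\<delta>^3/e2) * ?F2 v)"
    using assms \<open>\<delta> \<noteq> 0\<close> by (intro span2_change_basis) simp
  also have "\<dots> = span2 (\<lambda>v. (linform \<delta> 0 v)^3 + (\<delta>^3/e1) * (linform k1 1 v)^3)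
       (\<lambda>v. (linform \<delta> 0 v)^3 + (\<delta>^3/e2) * (linform \<delta> 0 v + linform k1 1 v)^3)"
  proof -
    have "linform \<delta> 0 v = \<delta> * linform 1 0 v" "linform \<delta> 0 v + linform k1 1 v = linform k2 1 v" for v
      by (simp_all add: linform_def \<delta>_def algebra_simps split: prod.split)
    then show ?thesis
      using assms by (simp add: power_mult_distrib distrib_left)
  qed
  finally show ?thesis
    unfolding secant_normal_form_def using \<open>\<delta> \<noteq> 0\<close>
    by (intro exI[of _ \<delta>] exI[of _ 0] exI[of _ k1] exI[of _ 1] exI[of _ "\<delta>^3/e1"]
        exI[of _ "\<delta>^3/e2"]) simp
qed

lemma standard_pencil_secant_combination:
  fixes a b c d k :: "'a::comm_ring_1"
  assumes "3*k^2 = 3*b*k + d"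
  shows "(\<lambda>v. 3*k * cubic (a, b, 1, 0) v + 1 * cubic (c, d, 0, 1) v) =
         (\<lambda>v. (3*k*a + c - k^3) * (linform 1 0 v)^3 + (linform k 1 v)^3)"
proof (rule ext, clarify)
  fix X Y :: 'a
  have "3*k*(b*X^2*Y) + d*X^2*Y = 3*k^2*X^2*Y"
    using assms by (simp add: algebra_simps)
  then show "3*k * cubic (a, b, 1, 0) (X, Y) + 1 * cubic (c, d, 0, 1) (X, Y) =
             (3*k*a + c - k^3) * (linform 1 0 (X, Y))^3 + (linform k 1 (X, Y))^3"
    by (simp add: linform_def power2_eq_square power3_eq_cube algebra_simps)
qed

lemma secant_normal_form_standard_pencil_if_discr:
  fixes a b c d :: "'a::{alg_closed_field, field_char_0}"
  assumes discr: "3*b^2 + 4*d \<noteq> 0"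
    and avoids: "\<forall>h\<in>span2 (cubic (a, b, 1, 0)) (cubic (c, d, 0, 1)). \<not> on_veronese h"
  shows "secant_normal_form (span2 (cubic (a, b, 1, 0)) (cubic (c, d, 0, 1)))"
proof -
  let ?V = "span2 (cubic (a, b, 1, 0)) (cubic (c, d, 0, 1))"
  have "(-3*b)^2 - 4*3*(-d) = 3*(3*b^2 + 4*d)"
    by (simp add: power2_eq_square)
  with discr have "(-3*b)^2 - 4*3*(-d) \<noteq> 0"
    by (simp only: mult_eq_0_iff) simp
  then obtain k1 k2 where "k1 \<noteq> k2" "3*k1^2 + (-3*b)*k1 + -d = 0" "3*k2^2 + (-3*b)*k2 + -d = 0"
    using quadratic_two_roots[of 3 "-3*b" "-d"] by auto
  then have roots: "3*k1^2 = 3*b*k1 + d" "3*k2^2 = 3*b*k2 + d"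
    by (simp_all add: algebra_simps)
  define e1 where "e1 = 3*k1*a + c - k1^3"
  define e2 where "e2 = 3*k2*a + c - k2^3"
  have "?V = span2 (\<lambda>v. 3*k1 * cubic (a, b, 1, 0) v + 1 * cubic (c, d, 0, 1) v)
                   (\<lambda>v. 3*k2 * cubic (a, b, 1, 0) v + 1 * cubic (c, d, 0, 1) v)"
    using \<open>k1 \<noteq> k2\<close> by (intro span2_change_basis) simp
  also have "\<dots> = span2 (\<lambda>v. e1 * (linform 1 0 v)^3 + (linform k1 1 v)^3)
                        (\<lambda>v. e2 * (linform 1 0 v)^3 + (linform k2 1 v)^3)"
    unfolding e1_def e2_def
      standard_pencil_secant_combination[OF roots(1)] standard_pencil_secant_combination[OF roots(2)] ..
  finally have V: "?V = \<dots>" .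
  have nonzero: "e \<noteq> 0" if "(\<lambda>v. e * (linform 1 0 v)^3 + (linform k 1 v)^3) \<in> ?V" for e k
    using that cube_notin_if_avoids_veronese[OF avoids, of k] by auto
  have "e1 \<noteq> 0" "e2 \<noteq> 0"
    by (rule nonzero, unfold V, rule span2_generators)+
  then show ?thesis
    unfolding V using \<open>k1 \<noteq> k2\<close> by (rule secant_normal_form_of_secants)
qed

(*
  For the pencil spanned by the cubics with coefficient rows F and G: plucker23 is nonzero iff no
  nonzero member is divisible by X^2, and pencil_discr is a third of the discriminant of the binary
  quadratic form h2^2 - 3 h1 h3 in the pencil parameters; its zeros with h3 nonzero are the members h
  for which h - e X^3 is a multiple of a cube for some e.
*)
fun plucker23 :: "'a \<times> 'a \<times> 'a \<times> 'a \<Rightarrow> 'a \<times> 'a \<times> 'a \<times> 'a \<Rightarrow> 'a::comm_ring_1" where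
  "plucker23 (f0, f1, f2, f3) (g0, g1, g2, g3) = f2*g3 - f3*g2"

fun pencil_discr :: "'a \<times> 'a \<times> 'a \<times> 'a \<Rightarrow> 'a \<times> 'a \<times> 'a \<times> 'a \<Rightarrow> 'a::comm_ring_1" where
  "pencil_discr (f0, f1, f2, f3) (g0, g1, g2, g3) =
     3*(f1*g3 - f3*g1)^2 - 4*(f1*g2 - f2*g1)*(f2*g3 - f3*g2)"

lemma ex_standard_pencil_basis:
  fixes F G :: "'a::field \<times> 'a \<times> 'a \<times> 'a"
  assumes "plucker23 F G \<noteq> 0"
  shows "\<exists>a b c d. span2 (cubic F) (cubic G) = span2 (cubic (a, b, 1, 0)) (cubic (c, d, 0, 1)) \<and>
                   pencil_discr F G = (plucker23 F G)^2 * (3*b^2 + 4*d)"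
proof -
  obtain f0 f1 f2 f3 g0 g1 g2 g3 where F: "F = (f0, f1, f2, f3)" and G: "G = (g0, g1, g2, g3)"
    by (metis prod_cases4)
  define D where "D = f2*g3 - f3*g2"
  have "D \<noteq> 0"
    using assms by (simp add: F G D_def)
  define a b c d where "a = (g3*f0 - f3*g0)/D" and "b = (g3*f1 - f3*g1)/D"
    and "c = (f2*g0 - g2*f0)/D" and "d = (f2*g1 - g2*f1)/D"
  have first: "(\<lambda>v. (g3/D) * cubic F v + (-f3/D) * cubic G v) = cubic (a, b, 1, 0)"
    unfolding F G cubic_lincomb a_def b_def using \<open>D \<noteq> 0\<close>
    by (simp add: field_simps) (simp add: D_def algebra_simps)
  have second: "(\<lambda>v. (-g2/D) * cubic F v + (f2/D) * cubic G v) = cubic (c, d, 0, 1)"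
    unfolding F G cubic_lincomb c_def d_def using \<open>D \<noteq> 0\<close>
    by (simp add: field_simps) (simp add: D_def algebra_simps)
  have "g3*f2 - g2*f3 = D"
    by (simp add: D_def algebra_simps)
  then have "(g3/D) * (f2/D) - (-g2/D) * (-f3/D) = 1/D"
    using \<open>D \<noteq> 0\<close> by (simp add: diff_divide_distrib[symmetric] power2_eq_square)
  then have "span2 (cubic F) (cubic G) = span2 (cubic (a, b, 1, 0)) (cubic (c, d, 0, 1))"
    unfolding first[symmetric] second[symmetric] using \<open>D \<noteq> 0\<close> by (intro span2_change_basis) simp
  moreover have "D^2 * (3*b^2 + 4*d) = 3*(g3*f1 - f3*g1)^2 + 4*D*(f2*g1 - g2*f1)"
    unfolding b_def d_def using \<open>D \<noteq> 0\<close> by (simp add: field_simps power2_eq_square)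
  then have "pencil_discr F G = (plucker23 F G)^2 * (3*b^2 + 4*d)"
    by (simp add: F G D_def power2_eq_square algebra_simps)
  ultimately show ?thesis
    by blast
qed

lemma secant_normal_form_nondegenerate:
  fixes F G :: "'a::{alg_closed_field, field_char_0} \<times> 'a \<times> 'a \<times> 'a"
  assumes "plucker23 F G \<noteq> 0" and "pencil_discr F G \<noteq> 0"
    and avoids: "\<forall>h\<in>span2 (cubic F) (cubic G). \<not> on_veronese h"
  shows "secant_normal_form (span2 (cubic F) (cubic G))"
proof -
  obtain a b c d where V: "span2 (cubic F) (cubic G) = span2 (cubic (a, b, 1, 0)) (cubic (c, d, 0, 1))"
    and "pencil_discr F G = (plucker23 F G)^2 * (3*b^2 + 4*d)"
    using ex_standard_pencil_basis[OF assms(1)] by blast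
  with assms(2) have "3*b^2 + 4*d \<noteq> 0"
    by auto
  then show ?thesis
    using avoids unfolding V by (rule secant_normal_form_standard_pencil_if_discr)
qed

lemma cubic_pair_dependent:
  fixes f0 f1 f2 f3 g0 g1 g2 g3 :: "'a::field"
  assumes "f0*g1 - f1*g0 = 0" "f0*g2 - f2*g0 = 0" "f0*g3 - f3*g0 = 0"
    "f1*g2 - f2*g1 = 0" "f1*g3 - f3*g1 = 0" "f2*g3 - f3*g2 = 0"
  shows "\<exists>\<alpha> \<beta>. (\<alpha> \<noteq> 0 \<or> \<beta> \<noteq> 0) \<and>
           (\<lambda>v. \<alpha> * cubic (f0, f1, f2, f3) v + \<beta> * cubic (g0, g1, g2, g3) v) = (\<lambda>_. 0)"
proof (cases "f0 = 0 \<and> f1 = 0 \<and> f2 = 0 \<and> f3 = 0")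
  case True
  then show ?thesis
    by (intro exI[of _ 1] exI[of _ 0]) (simp add: cubic_lincomb cubic_zero)
next
  case False
  then obtain x y where "x \<noteq> 0" and xy: "(x, y) \<in> {(f0, g0), (f1, g1), (f2, g2), (f3, g3)}"
    by auto
  have "y*f0 - x*g0 = 0" "y*f1 - x*g1 = 0" "y*f2 - x*g2 = 0" "y*f3 - x*g3 = 0"
    using xy assms by (auto simp: algebra_simps)
  then have "(\<lambda>v. y * cubic (f0, f1, f2, f3) v + (-x) * cubic (g0, g1, g2, g3) v) = (\<lambda>_. 0)"
    unfolding cubic_lincomb by (simp add: cubic_zero)
  with \<open>x \<noteq> 0\<close> show ?thesis
    by (intro exI[of _ y] exI[of _ "-x"]) simp
qed

lemma ex_shear_plucker23_nonzero:
  fixes F G :: "'a::field_char_0 \<times> 'a \<times> 'a \<times> 'a"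
  assumes indep: "\<forall>\<alpha> \<beta>. (\<lambda>v. \<alpha> * cubic F v + \<beta> * cubic G v) = (\<lambda>_. 0) \<longrightarrow> \<alpha> = 0 \<and> \<beta> = 0"
  shows "\<exists>t. plucker23 (shear_coeffs t F) (shear_coeffs t G) \<noteq> 0"
proof -
  obtain f0 f1 f2 f3 g0 g1 g2 g3 where F: "F = (f0, f1, f2, f3)" and G: "G = (g0, g1, g2, g3)"
    by (metis prod_cases4)
  define p :: "'a poly" where "p = [:f2*g3 - f3*g2, -2*(f1*g3 - f3*g1),
     3*(f0*g3 - f3*g0) + (f1*g2 - f2*g1), -2*(f0*g2 - f2*g0), f0*g1 - f1*g0:]"
  have p_eval: "poly p t = plucker23 (shear_coeffs t F) (shear_coeffs t G)" for t
    by (simp add: p_def F G algebra_simps power2_eq_square power3_eq_cube)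
  have "p \<noteq> 0"
  proof
    assume "p = 0"
    then have m: "f2*g3 - f3*g2 = 0" "f1*g3 - f3*g1 = 0" "f0*g2 - f2*g0 = 0" "f0*g1 - f1*g0 = 0"
      and "3*(f0*g3 - f3*g0) + (f1*g2 - f2*g1) = 0"
      by (simp_all only: p_def pCons_eq_0_iff) simp_all
    then have m12: "f1*g2 - f2*g1 = -(3*(f0*g3 - f3*g0))"
      by (simp add: add_eq_0_iff)
    \<comment> \<open>Pluecker relation\<close>
    have "(f0*g1 - f1*g0)*(f2*g3 - f3*g2) - (f0*g2 - f2*g0)*(f1*g3 - f3*g1)
          + (f0*g3 - f3*g0)*(f1*g2 - f2*g1) = 0"
      by (simp add: algebra_simps)
    then have "(f0*g3 - f3*g0) * (-(3*(f0*g3 - f3*g0))) = 0"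
      unfolding m m12 by simp
    then have "f0*g3 - f3*g0 = 0"
      by (simp only: mult_eq_0_iff neg_equal_0_iff_equal) simp
    with m m12 have "\<exists>\<alpha> \<beta>. (\<alpha> \<noteq> 0 \<or> \<beta> \<noteq> 0) \<and>
                       (\<lambda>v. \<alpha> * cubic F v + \<beta> * cubic G v) = (\<lambda>_. 0)"
      unfolding F G by (intro cubic_pair_dependent) simp_all
    with indep show False
      by blast
  qed
  then show ?thesis
    using poly_all_0_iff_0[of p] p_eval by auto
qed

lemma ex_shear_standard_pencil_nondegenerate:
  fixes a b c d :: "'a::field_char_0"
  assumes avoids: "\<forall>h\<in>span2 (cubic (a, b, 1, 0)) (cubic (c, d, 0, 1)). \<not> on_veronese h"
  shows "\<exists>s. plucker23 (shear_coeffs s (a, b, 1, 0)) (shear_coeffs s (c, d, 0, 1)) \<noteq> 0 \<and>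
             pencil_discr (shear_coeffs s (a, b, 1, 0)) (shear_coeffs s (c, d, 0, 1)) \<noteq> 0"
proof -
  define p :: "'a poly" where "p = [:1, -2*b, 3*a - d, 2*c, a*d - b*c:]"
  define q0 where "q0 = 4*d + 3*b^2"
  define q1 where "q1 = -12*c - 2*b*d - 18*a*b"
  define q2 where "q2 = -(d^2) + 18*b*c - 18*a*d + 27*a^2"
  define q :: "'a poly" where "q = [:q0, q1, q2, 2*c*d - 12*b^2*c + 18*a*c + 12*a*b*d,
     3*c^2 - 4*b*c*d + 4*a*d^2:]"
  have p_eval: "poly p s = plucker23 (shear_coeffs s (a, b, 1, 0)) (shear_coeffs s (c, d, 0, 1))" for s
    by (simp add: p_def algebra_simps power2_eq_square power3_eq_cube)
  have q_eval: "poly q s = pencil_discr (shear_coeffs s (a, b, 1, 0)) (shear_coeffs s (c, d, 0, 1))" for s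
    by (simp add: q_def q0_def q1_def q2_def algebra_simps power2_eq_square power3_eq_cube)
  have "q \<noteq> 0"
  proof
    assume "q = 0"
    then have "q0 = 0" "q1 = 0" "q2 = 0"
      by (simp_all add: q_def)
    have "8*c + 12*a*b - b^3 = -(2*q1 + b*q0)/3"
      by (simp add: q0_def q1_def field_simps power2_eq_square power3_eq_cube)
    with \<open>q0 = 0\<close> \<open>q1 = 0\<close> have c: "8*c + 12*a*b - b^3 = 0"
      by simp
    have "(4*a - b^2)^2 = (16*q2 - (6*b^2 - 72*a - q0)*q0 - 36*b*(8*c + 12*a*b - b^3))/27"
      by (simp add: q0_def q2_def field_simps power2_eq_square power3_eq_cube)
    with \<open>q0 = 0\<close> \<open>q2 = 0\<close> c have "4*a - b^2 = 0"
      by simp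
    then have a: "a = b^2/4"
      by (simp add: field_simps mult.commute)
    from c have c: "c = (b^3 - 12*a*b)/8"
      by (simp add: field_simps)
    from \<open>q0 = 0\<close> have d: "d = -3*b^2/4"
      by (simp add: q0_def field_simps add_eq_0_iff2)
    have "(\<lambda>v. (linform (b/2) 1 v)^3) = (\<lambda>v. (3*b/2) * cubic (a, b, 1, 0) v + 1 * cubic (c, d, 0, 1) v)"
      unfolding c a d by (auto simp: fun_eq_iff linform_def field_simps power2_eq_square power3_eq_cube)
    then have "(\<lambda>v. (linform (b/2) 1 v)^3) \<in> span2 (cubic (a, b, 1, 0)) (cubic (c, d, 0, 1))"
      unfolding span2_def by blast
    with cube_notin_if_avoids_veronese[OF avoids] show False
      by blast
  qed
  moreover have "p \<noteq> 0"
    by (simp add: p_def)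
  ultimately obtain s where "poly (p * q) s \<noteq> 0"
    using poly_all_0_iff_0[of "p * q"] by auto
  then show ?thesis
    using p_eval q_eval by auto
qed

lemma secant_normal_form_standard_pencil:
  fixes a b c d :: "'a::{alg_closed_field, field_char_0}"
  assumes avoids: "\<forall>h\<in>span2 (cubic (a, b, 1, 0)) (cubic (c, d, 0, 1)). \<not> on_veronese h"
  shows "secant_normal_form (span2 (cubic (a, b, 1, 0)) (cubic (c, d, 0, 1)))"
proof -
  obtain s where nondeg:
    "plucker23 (shear_coeffs s (a, b, 1, 0)) (shear_coeffs s (c, d, 0, 1)) \<noteq> 0"
    "pencil_discr (shear_coeffs s (a, b, 1, 0)) (shear_coeffs s (c, d, 0, 1)) \<noteq> 0"
    using ex_shear_standard_pencil_nondegenerate[OF avoids] by blast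
  have "secant_normal_form (shear s ` span2 (cubic (a, b, 1, 0)) (cubic (c, d, 0, 1)))"
    using secant_normal_form_nondegenerate[OF nondeg] avoids_veronese_shear[OF avoids]
    unfolding span2_cubic_shear_coeffs by blast
  then show ?thesis
    by (simp add: secant_normal_form_shear_iff)
qed

theorem lemma2p2:
  fixes f g :: "'a::{alg_closed_field, field_char_0} \<times> 'a \<Rightarrow> 'a"
  assumes "is_cubic_form f" and "is_cubic_form g"
    and "\<forall>\<alpha> \<beta>. (\<lambda>v. \<alpha> * f v + \<beta> * g v) = (\<lambda>_. 0) \<longrightarrow> \<alpha> = 0 \<and> \<beta> = 0"
    and "\<forall>h \<in> span2 f g. \<not> on_veronese h"
  shows "\<exists>p q r s a b. p * s - q * r \<noteq> 0 \<and>
           span2 f g =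
             span2 (\<lambda>v. (linform p q v)^3 + a * (linform r s v)^3)
                   (\<lambda>v. (linform p q v)^3 + b * (linform p q v + linform r s v)^3)"
proof -
  obtain F G where f: "f = cubic F" and g: "g = cubic G"
    using assms(1,2) by (auto simp: is_cubic_form_iff)
  obtain t where "plucker23 (shear_coeffs t F) (shear_coeffs t G) \<noteq> 0"
    using ex_shear_plucker23_nonzero assms(3) unfolding f g by blast
  then obtain a b c d where
    normal: "shear t ` span2 f g = span2 (cubic (a, b, 1, 0)) (cubic (c, d, 0, 1))"
    using ex_standard_pencil_basis unfolding f g span2_cubic_shear_coeffs[symmetric] by blast
  have "secant_normal_form (shear t ` span2 f g)"
    using avoids_veronese_shear[OF assms(4), of t] unfolding normal
    by (rule secant_normal_form_standard_pencil)
  then have "secant_normal_form (span2 f g)"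
    by (simp only: secant_normal_form_shear_iff)
  then show ?thesis
    unfolding secant_normal_form_def .
qed

end
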